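(* Let $R$ be a regular run and let $0\le\alpha<\beta$ be reals with $\alpha+d_{open}<\beta-\Delta_{close}$. If TrackStatus$(x)\neq$ incrossing over the open interval $(\alpha,\beta)$ for every track $x$, then GateStatus = opened over $[\alpha+d_{open},\,\beta-\Delta_{close}]$.
   Context: Setting (evolving algebra for the railroad crossing). States are structures over a vocabulary containing: a finite universe Tracks; the reals and ExtendedReals $=\mathbb{R}\cup\{\infty\}$ with standard $<$ and $+$ ($\infty$ largest); a nullary real-valued symbol $\mathrm{CT}$ (current time); positive real constants $d_{close},d_{open},d_{min},d_{max}$ with $d_{close}<d_{min}\le d_{max}$; a unary function TrackStatus from Tracks to $\{\text{empty},\text{coming},\text{incrossing}\}$; a unary function Deadline from Tracks to ExtendedReals; a nullary Dir with values in $\{\text{open},\text{close}\}$; a nullary GateStatus with values in $\{\text{opened},\text{closed}\}$. Put $W=d_{min}-d_{close}$ and $\Delta_{close}=d_{close}+(d_{max}-d_{min})=d_{max}-W$. For a track $x$, $s(x)$ is the condition [$\mathrm{TrackStatus}(x)=\text{empty}$ or $\mathrm{CT}+d_{open}<\mathrm{Deadline}(x)$], and SafeToOpen is $\forall x\in\mathrm{Tracks}\ s(x)$. The program has two modules (agents). Gate: simultaneously OpenGate "if Dir=open then GateStatus:=opened" and CloseGate "if Dir=close then GateStatus:=closed". Controller: simultaneously, for every track $x$, SetDeadline$(x)$ "if TrackStatus$(x)$=coming and Deadline$(x)=\infty$ then Deadline$(x):=\mathrm{CT}+W$", SignalClose$(x)$ "if $\mathrm{CT}=$Deadline$(x)$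 then Dir:=close", ClearDeadline$(x)$ "if TrackStatus$(x)$=empty and Deadline$(x)<\infty$ then Deadline$(x):=\infty$", together with SignalOpen "if Dir=close and SafeToOpen then Dir:=open". Executing a module means computing all updates it generates in the current state and performing them simultaneously (nothing happens if the update set is inconsistent). A module is enabled at a state if its update set is consistent and contains an update that changes the state. TrackStatus is external (changed only by the environment); Deadline, Dir, GateStatus are internal (changed only by the modules); other symbols are static. Runs: for $t\mapsto R(t)$, $t\in[0,\infty)$, let $\rho(t)$ be the reduct of $R(t)$ without CT. $R$ is a pre-run if all $R(t)$ share a superuniverse, $\mathrm{CT}=t$ in $R(t)$, and for every $\tau>0$ there are $0=t_0<\dots<t_n=\tau$ with $\rho$ constant on each $(t_i,t_{i+1})$. For a term $e$ (free variables fixed), $e_t$ is its value in $R(t)$, $e_{t+}$ (resp. $e_{t-}$, $t>0$) its constant value on some $(t,t+\epsilon)$ (resp. $(t-\epsilon,t)$); likewise $\rho(t\pm)$. $e$ holds over an interval if it holds at each point; $e$ becomes (is set to) $a$ at $t$ if $e_{t-}\ne a=e_t$ or $e_t\neq a=e_{t+}$. A pre-run is a run if (i) whenever $\rho(t+)\neq\rho(t)$, $\rho(t+)$ is the CT-free reduct of the result of executing some modules at $R(t)$ (these agents fire at $t$), with external functions equal in $\rho(t)$ and $\rho(t+)$; (ii) whenever $t>0$ and $\rho(t)\ne\rho(t-)$, they differ only in external functions. An agent is immediate if it fires at every moment it is enabled; bounded if immediate or there is $b>0$ with no interval $(t,t+b)$ over which it is enabled but never fires. Initial states: TrackStatus$(x)$=empty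 and Deadline$(x)=\infty$ for every track $x$. A regular run is a run $R$ with $R(0)$ initial such that: (Train Motion) for each track $x$ there is a finite or infinite sequence $0=t_0<t_1<t_2<\cdots$ (the significant moments of $x$) with TrackStatus$(x)$=empty over each $[t_{3i},t_{3i+1})$, =coming over each $[t_{3i+1},t_{3i+2})$ where $d_{min}\le t_{3i+2}-t_{3i+1}\le d_{max}$, =incrossing over each $[t_{3i+2},t_{3i+3})$, and, if the sequence is finite with last element $t_k$, then $3\mid k$ and TrackStatus$(x)$=empty over $[t_k,\infty)$; (Controller Timing) Controller is immediate; (Gate Timing) Gate is bounded, there is no interval $(t,t+d_{close})$ over which Dir=close and GateStatus=opened both hold, and no interval $(t,t+d_{open})$ over which Dir=open and GateStatus=closed both hold. *)

theory Defs
  imports Main "HOL.Real"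
begin

datatype xreal = Fin real | Infty

fun xlt :: "xreal \<Rightarrow> xreal \<Rightarrow> bool" where
  "xlt (Fin a) (Fin b) = (a < b)"
| "xlt (Fin a) Infty = True"
| "xlt Infty _ = False"

datatype tstat = Empty | Coming | Incrossing
datatype dirv = DOpen | DClose
datatype gstat = Opened | Closed

text \<open>CT-free part of a state (the static symbols are parameters, CT is the time).\<close>
record 'trk st =
  TS  :: "'trk \<Rightarrow> tstat"
  DL  :: "'trk \<Rightarrow> xreal"
  Dir :: dirv
  GS  :: gstat

datatype 'trk upd = UDeadline 'trk xreal | UDir dirv | UGate gstat

datatype module = GateM | ControllerM

text \<open>Parameters: dc = d_close, dop = d_open, dmin = d_min, dmax = d_max.\<close>

definition Wd :: "real \<Rightarrow> real \<Rightarrow> real" where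
  "Wd dc dmin = dmin - dc"

definition Delta_close :: "real \<Rightarrow> real \<Rightarrow> real \<Rightarrow> real" where
  "Delta_close dc dmin dmax = dc + (dmax - dmin)"

definition safe_to_open :: "'trk set \<Rightarrow> real \<Rightarrow> 'trk st \<Rightarrow> real \<Rightarrow> bool" where
  "safe_to_open Trk dop s ct =
     (\<forall>x\<in>Trk. TS s x = Empty \<or> xlt (Fin (ct + dop)) (DL s x))"

definition gate_updates :: "'trk st \<Rightarrow> 'trk upd set" where
  "gate_updates s =
     (if Dir s = DOpen then {UGate Opened} else {}) \<union>
     (if Dir s = DClose then {UGate Closed} else {})"

definition ctrl_updates ::
  "'trk set \<Rightarrow> real \<Rightarrow> real \<Rightarrow> real \<Rightarrow> 'trk st \<Rightarrow> real \<Rightarrow> 'trk upd set" where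
  "ctrl_updates Trk dc dop dmin s ct =
     {UDeadline x (Fin (ct + Wd dc dmin)) | x. x \<in> Trk \<and> TS s x = Coming \<and> DL s x = Infty}
     \<union> {UDir DClose | x. x \<in> Trk \<and> Fin ct = DL s x}
     \<union> {UDeadline x Infty | x. x \<in> Trk \<and> TS s x = Empty \<and> xlt (DL s x) Infty}
     \<union> (if Dir s = DClose \<and> safe_to_open Trk dop s ct then {UDir DOpen} else {})"

definition updates ::
  "'trk set \<Rightarrow> real \<Rightarrow> real \<Rightarrow> real \<Rightarrow> module \<Rightarrow> 'trk st \<Rightarrow> real \<Rightarrow> 'trk upd set" where
  "updates Trk dc dop dmin m s ct =
     (case m of GateM \<Rightarrow> gate_updates s | ControllerM \<Rightarrow> ctrl_updates Trk dc dop dmin s ct)"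

definition consistent :: "'trk upd set \<Rightarrow> bool" where
  "consistent U =
     ((\<forall>x a b. UDeadline x a \<in> U \<and> UDeadline x b \<in> U \<longrightarrow> a = b) \<and>
      (\<forall>a b. UDir a \<in> U \<and> UDir b \<in> U \<longrightarrow> a = b) \<and>
      (\<forall>a b. UGate a \<in> U \<and> UGate b \<in> U \<longrightarrow> a = b))"

definition apply_upd :: "'trk upd set \<Rightarrow> 'trk st \<Rightarrow> 'trk st" where
  "apply_upd U s =
     s\<lparr> DL := (\<lambda>x. if \<exists>v. UDeadline x v \<in> U then (THE v. UDeadline x v \<in> U) else DL s x),
        Dir := (if \<exists>v. UDir v \<in> U then (THE v. UDir v \<in> U) else Dir s),
        GS := (if \<exists>v. UGate v \<in> U then (THE v. UGate v \<in> U) else GS s) \<rparr>"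

definition exec_modules ::
  "'trk set \<Rightarrow> real \<Rightarrow> real \<Rightarrow> real \<Rightarrow> module set \<Rightarrow> 'trk st \<Rightarrow> real \<Rightarrow> 'trk st" where
  "exec_modules Trk dc dop dmin M s ct =
     apply_upd (\<Union>m\<in>{m \<in> M. consistent (updates Trk dc dop dmin m s ct)}.
                  updates Trk dc dop dmin m s ct) s"

definition changes :: "'trk upd \<Rightarrow> 'trk st \<Rightarrow> bool" where
  "changes u s = (case u of UDeadline x v \<Rightarrow> DL s x \<noteq> v
                          | UDir v \<Rightarrow> Dir s \<noteq> v
                          | UGate v \<Rightarrow> GS s \<noteq> v)"

definition enabled ::
  "'trk set \<Rightarrow> real \<Rightarrow> real \<Rightarrow> real \<Rightarrow> module \<Rightarrow> 'trk st \<Rightarrow> real \<Rightarrow> bool" where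
  "enabled Trk dc dop dmin m s ct =
     (consistent (updates Trk dc dop dmin m s ct) \<and>
      (\<exists>u \<in> updates Trk dc dop dmin m s ct. changes u s))"

text \<open>A pre-run is given by its CT-free reducts \<rho> t (t \<ge> 0); CT = t in R(t).\<close>
definition pre_run :: "(real \<Rightarrow> 'trk st) \<Rightarrow> bool" where
  "pre_run \<rho> =
     (\<forall>\<tau>>0. \<exists>ts :: real list. ts \<noteq> [] \<and> sorted_wrt (<) ts \<and> hd ts = 0 \<and> last ts = \<tau> \<and>
        (\<forall>i. Suc i < length ts \<longrightarrow>
           (\<forall>u \<in> {ts!i<..<ts!Suc i}. \<forall>v \<in> {ts!i<..<ts!Suc i}. \<rho> u = \<rho> v)))"

definition rplus :: "(real \<Rightarrow> 'trk st) \<Rightarrow> real \<Rightarrow> 'trk st" where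
  "rplus \<rho> t = (THE s. \<exists>\<epsilon>>0. \<forall>u \<in> {t<..<t+\<epsilon>}. \<rho> u = s)"

definition rminus :: "(real \<Rightarrow> 'trk st) \<Rightarrow> real \<Rightarrow> 'trk st" where
  "rminus \<rho> t = (THE s. \<exists>\<epsilon>>0. \<forall>u \<in> {t-\<epsilon><..<t}. \<rho> u = s)"

definition same_internal :: "'trk st \<Rightarrow> 'trk st \<Rightarrow> bool" where
  "same_internal s s' = (DL s = DL s' \<and> Dir s = Dir s' \<and> GS s = GS s')"

definition is_run ::
  "'trk set \<Rightarrow> real \<Rightarrow> real \<Rightarrow> real \<Rightarrow> (real \<Rightarrow> 'trk st) \<Rightarrow> bool" where
  "is_run Trk dc dop dmin \<rho> =
     (pre_run \<rho> \<and>
      (\<forall>t\<ge>0. rplus \<rho> t \<noteq> \<rho> t \<longrightarrow>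
         (\<exists>M. rplus \<rho> t = exec_modules Trk dc dop dmin M (\<rho> t) t) \<and>
         TS (rplus \<rho> t) = TS (\<rho> t)) \<and>
      (\<forall>t>0. \<rho> t \<noteq> rminus \<rho> t \<longrightarrow> same_internal (\<rho> t) (rminus \<rho> t)))"

definition fires ::
  "'trk set \<Rightarrow> real \<Rightarrow> real \<Rightarrow> real \<Rightarrow> (real \<Rightarrow> 'trk st) \<Rightarrow> module \<Rightarrow> real \<Rightarrow> bool" where
  "fires Trk dc dop dmin \<rho> m t =
     (rplus \<rho> t \<noteq> \<rho> t \<and>
      (\<exists>M. m \<in> M \<and> rplus \<rho> t = exec_modules Trk dc dop dmin M (\<rho> t) t \<and>
           TS (rplus \<rho> t) = TS (\<rho> t)))"

definition immediate ::
  "'trk set \<Rightarrow> real \<Rightarrow> real \<Rightarrow> real \<Rightarrow> (real \<Rightarrow> 'trk st) \<Rightarrow> module \<Rightarrow> bool" where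
  "immediate Trk dc dop dmin \<rho> m =
     (\<forall>t\<ge>0. enabled Trk dc dop dmin m (\<rho> t) t \<longrightarrow> fires Trk dc dop dmin \<rho> m t)"

definition bounded ::
  "'trk set \<Rightarrow> real \<Rightarrow> real \<Rightarrow> real \<Rightarrow> (real \<Rightarrow> 'trk st) \<Rightarrow> module \<Rightarrow> bool" where
  "bounded Trk dc dop dmin \<rho> m =
     (immediate Trk dc dop dmin \<rho> m \<or>
      (\<exists>b>0. \<not> (\<exists>t\<ge>0. (\<forall>u \<in> {t<..<t+b}. enabled Trk dc dop dmin m (\<rho> u) u) \<and>
                        (\<forall>u \<in> {t<..<t+b}. \<not> fires Trk dc dop dmin \<rho> m u))))"

definition initial_state :: "'trk set \<Rightarrow> 'trk st \<Rightarrow> bool" where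
  "initial_state Trk s = (\<forall>x\<in>Trk. TS s x = Empty \<and> DL s x = Infty)"

definition motion_segment ::
  "real \<Rightarrow> real \<Rightarrow> (real \<Rightarrow> 'trk st) \<Rightarrow> 'trk \<Rightarrow> (nat \<Rightarrow> real) \<Rightarrow> nat \<Rightarrow> bool" where
  "motion_segment dmin dmax \<rho> x tm i =
     ((\<forall>u \<in> {tm (3*i)..<tm (3*i+1)}. TS (\<rho> u) x = Empty) \<and>
      (\<forall>u \<in> {tm (3*i+1)..<tm (3*i+2)}. TS (\<rho> u) x = Coming) \<and>
      dmin \<le> tm (3*i+2) - tm (3*i+1) \<and> tm (3*i+2) - tm (3*i+1) \<le> dmax \<and>
      (\<forall>u \<in> {tm (3*i+2)..<tm (3*i+3)}. TS (\<rho> u) x = Incrossing))"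

definition train_motion :: "real \<Rightarrow> real \<Rightarrow> (real \<Rightarrow> 'trk st) \<Rightarrow> 'trk \<Rightarrow> bool" where
  "train_motion dmin dmax \<rho> x =
     ((\<exists>tm :: nat \<Rightarrow> real. tm 0 = 0 \<and> strict_mono tm \<and>
         (\<forall>i. motion_segment dmin dmax \<rho> x tm i)) \<or>
      (\<exists>(tm :: nat \<Rightarrow> real) k. tm 0 = 0 \<and> (\<forall>i<k. tm i < tm (Suc i)) \<and> 3 dvd k \<and>
         (\<forall>i. 3*i+3 \<le> k \<longrightarrow> motion_segment dmin dmax \<rho> x tm i) \<and>
         (\<forall>u\<ge>tm k. TS (\<rho> u) x = Empty)))"

definition gate_timing ::
  "'trk set \<Rightarrow> real \<Rightarrow> real \<Rightarrow> real \<Rightarrow> (real \<Rightarrow> 'trk st) \<Rightarrow> bool" where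
  "gate_timing Trk dc dop dmin \<rho> =
     (bounded Trk dc dop dmin \<rho> GateM \<and>
      \<not> (\<exists>t\<ge>0. \<forall>u \<in> {t<..<t+dc}. Dir (\<rho> u) = DClose \<and> GS (\<rho> u) = Opened) \<and>
      \<not> (\<exists>t\<ge>0. \<forall>u \<in> {t<..<t+dop}. Dir (\<rho> u) = DOpen \<and> GS (\<rho> u) = Closed))"

definition regular_run ::
  "'trk set \<Rightarrow> real \<Rightarrow> real \<Rightarrow> real \<Rightarrow> real \<Rightarrow> (real \<Rightarrow> 'trk st) \<Rightarrow> bool" where
  "regular_run Trk dc dop dmin dmax \<rho> =
     (is_run Trk dc dop dmin \<rho> \<and> initial_state Trk (\<rho> 0) \<and>
      (\<forall>x\<in>Trk. train_motion dmin dmax \<rho> x) \<and>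
      immediate Trk dc dop dmin \<rho> ControllerM \<and>
      gate_timing Trk dc dop dmin \<rho>)"

end

theory Submission
  imports Defs Complex_Main
begin

(* For each track the controller's Deadline equals tm(3i+1) + W while the i-th train is
   between the start of its approach (exclusive) and its departure (inclusive), and is
   infinite otherwise; this invariant is proved by real induction over time, using that runs
   are piecewise constant and that the controller is immediate. If no train is in the crossing
   during (alpha, beta), a train still coming at some t >= alpha enters it only at or after beta,
   and it enters at most d_max after tm(3i+1); so its deadline is at least
   beta - d_max + W = beta - Delta_close. Hence SafeToOpen holds at alpha and SignalClose does
   not fire in [alpha, beta - Delta_close), so Dir is open on (alpha, beta - Delta_close].
   Gate Timing gives a moment before alpha + d_open at which the gate is opened, and while Dir
   is open the gate can only stay opened. *)

section \<open>Real induction and one-sided limits\<close>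

lemma ex_index_bracketing:
  fixes f :: "nat \<Rightarrow> 'a::linorder"
  assumes "f 0 \<le> t" "t < f n"
  shows "\<exists>j<n. f j \<le> t \<and> t < f (Suc j)"
  using assms
proof (induction n)
  case 0
  then show ?case by simp
next
  case (Suc n)
  show ?case
  proof (cases "t < f n")
    case True
    with Suc obtain j where "j < n" "f j \<le> t" "t < f (Suc j)" by auto
    then show ?thesis by (auto intro!: exI[of _ j])
  next
    case False
    with Suc.prems show ?thesis by (auto intro!: exI[of _ n])
  qed
qed

lemma chain_less:
  fixes f :: "nat \<Rightarrow> 'a::order"
  assumes "\<And>i. i < n \<Longrightarrow> f i < f (Suc i)" "j < k" "k \<le> n"
  shows "f j < f k"
  using assms(2,3)
proof (induction k)
  case (Suc k)
  then show ?case using assms(1)[of k] by (cases "j = k") (auto intro: less_trans)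
qed simp

lemma real_interval_induct [consumes 2, case_names start right left]:
  fixes a b t :: real
  assumes "a \<le> b" "t \<in> {a..b}"
    and start: "P a"
    and right: "\<And>t. a \<le> t \<Longrightarrow> t < b \<Longrightarrow> P t \<Longrightarrow> eventually P (at_right t)"
    and left: "\<And>t. a < t \<Longrightarrow> t \<le> b \<Longrightarrow> (\<And>s. a \<le> s \<Longrightarrow> s < t \<Longrightarrow> P s) \<Longrightarrow> P t"
  shows "P t"
proof (rule ccontr)
  assume "\<not> P t"
  define B where "B = {s \<in> {a..b}. \<not> P s}"
  have "t \<in> B" using \<open>\<not> P t\<close> assms(2) by (simp add: B_def)
  have bdd: "bdd_below B" by (auto simp: B_def intro: bdd_belowI[of _ a])
  define c where "c = Inf B"
  have "a \<le> c" unfolding c_def using \<open>t \<in> B\<close> by (intro cInf_greatest) (auto simp: B_def)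
  have "c \<le> t" unfolding c_def using \<open>t \<in> B\<close> bdd by (rule cInf_lower)
  have below: "P s" if "a \<le> s" "s < c" for s
    using cInf_lower[OF _ bdd, of s] that \<open>c \<le> t\<close> assms(2) by (force simp: B_def c_def)
  have "P c"
    using \<open>a \<le> c\<close> \<open>c \<le> t\<close> assms(2) start left[of c] below by (cases "c = a") auto
  then have "c < b" using \<open>c \<le> t\<close> \<open>\<not> P t\<close> assms(2) by (cases "c = t") auto
  then obtain r where "c < r" and r: "\<And>s. c < s \<Longrightarrow> s < r \<Longrightarrow> P s"
    using right[OF \<open>a \<le> c\<close> _ \<open>P c\<close>] unfolding eventually_at_right_field by blast
  have "r \<le> Inf B"
  proof (rule cInf_greatest)
    fix s assume "s \<in> B"
    have "c \<le> s" unfolding c_def using \<open>s \<in> B\<close> bdd by (rule cInf_lower)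
    with \<open>s \<in> B\<close> \<open>P c\<close> r show "r \<le> s" by (force simp: B_def)
  qed (use \<open>t \<in> B\<close> in blast)
  with \<open>c < r\<close> show False by (simp add: c_def)
qed

lemma eventually_at_right_interval:
  fixes t :: real
  shows "eventually P (at_right t) \<longleftrightarrow> (\<exists>\<epsilon>>0. \<forall>u \<in> {t<..<t+\<epsilon>}. P u)"
  unfolding eventually_at_right_field
proof safe
  fix b assume "t < b" "\<forall>u>t. u < b \<longrightarrow> P u"
  then show "\<exists>\<epsilon>>0. \<forall>u \<in> {t<..<t+\<epsilon>}. P u" by (intro exI[of _ "b - t"]) auto
next
  fix \<epsilon> :: real assume "0 < \<epsilon>" "\<forall>u \<in> {t<..<t+\<epsilon>}. P u"
  then show "\<exists>b>t. \<forall>u>t. u < b \<longrightarrow> P u" by (intro exI[of _ "t + \<epsilon>"]) auto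
qed

lemma eventually_at_left_interval:
  fixes t :: real
  shows "eventually P (at_left t) \<longleftrightarrow> (\<exists>\<epsilon>>0. \<forall>u \<in> {t-\<epsilon><..<t}. P u)"
  unfolding eventually_at_left_field
proof safe
  fix b assume "b < t" "\<forall>u>b. u < t \<longrightarrow> P u"
  then show "\<exists>\<epsilon>>0. \<forall>u \<in> {t-\<epsilon><..<t}. P u" by (intro exI[of _ "t - b"]) auto
next
  fix \<epsilon> :: real assume "0 < \<epsilon>" "\<forall>u \<in> {t-\<epsilon><..<t}. P u"
  then show "\<exists>b<t. \<forall>u>b. u < t \<longrightarrow> P u" by (intro exI[of _ "t - \<epsilon>"]) auto
qed

lemma rplus_eqI:
  assumes "eventually (\<lambda>u. \<rho> u = s) (at_right t)"
  shows "rplus \<rho> t = s"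
  unfolding rplus_def eventually_at_right_interval[symmetric]
proof (rule the_equality)
  fix s' assume "eventually (\<lambda>u. \<rho> u = s') (at_right t)"
  with assms have "eventually (\<lambda>u. s' = s) (at_right t)" by eventually_elim simp
  then show "s' = s" by simp
qed (fact assms)

lemma rminus_eqI:
  assumes "eventually (\<lambda>u. \<rho> u = s) (at_left t)"
  shows "rminus \<rho> t = s"
  unfolding rminus_def eventually_at_left_interval[symmetric]
proof (rule the_equality)
  fix s' assume "eventually (\<lambda>u. \<rho> u = s') (at_left t)"
  with assms have "eventually (\<lambda>u. s' = s) (at_left t)" by eventually_elim simp
  then show "s' = s" by simp
qed (fact assms)

section \<open>Runs\<close>

lemma pre_run_eventually_rplus:
  assumes "pre_run \<rho>" "0 \<le> t"
  shows "eventually (\<lambda>u. \<rho> u = rplus \<rho> t) (at_right t)"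
proof -
  obtain ts :: "real list" where ts: "ts \<noteq> []" "sorted_wrt (<) ts" "hd ts = 0" "last ts = t + 1"
    and const: "\<And>i. Suc i < length ts \<Longrightarrow>
                  \<forall>u \<in> {ts!i<..<ts!Suc i}. \<forall>v \<in> {ts!i<..<ts!Suc i}. \<rho> u = \<rho> v"
    using assms unfolding pre_run_def by (meson add_nonneg_pos zero_less_one)
  have "ts!0 \<le> t" "t < ts!(length ts - 1)"
    using ts assms(2) by (simp_all add: hd_conv_nth last_conv_nth)
  then obtain i where i: "i < length ts - 1" "ts!i \<le> t" "t < ts!Suc i"
    using ex_index_bracketing[of "(!) ts"] by blast
  have "eventually (\<lambda>u. u \<in> {t<..<ts!Suc i}) (at_right t)"
    using i(3) by (rule eventually_at_right_real)
  then have "eventually (\<lambda>u. \<rho> u = \<rho> ((t + ts!Suc i) / 2)) (at_right t)"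
    by eventually_elim (use const[of i] i in auto)
  moreover from this have "rplus \<rho> t = \<rho> ((t + ts!Suc i) / 2)" by (rule rplus_eqI)
  ultimately show ?thesis by simp
qed

lemma pre_run_eventually_rminus:
  assumes "pre_run \<rho>" "0 < t"
  shows "eventually (\<lambda>u. \<rho> u = rminus \<rho> t) (at_left t)"
proof -
  obtain ts :: "real list" where ts: "ts \<noteq> []" "sorted_wrt (<) ts" "hd ts = 0" "last ts = t"
    and const: "\<And>i. Suc i < length ts \<Longrightarrow>
                  \<forall>u \<in> {ts!i<..<ts!Suc i}. \<forall>v \<in> {ts!i<..<ts!Suc i}. \<rho> u = \<rho> v"
    using assms unfolding pre_run_def by blast
  have "2 \<le> length ts"
    using ts assms(2) by (cases ts) (auto simp: Suc_le_eq)
  define i where "i = length ts - 2"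
  have "Suc i = length ts - 1" using \<open>2 \<le> length ts\<close> by (simp add: i_def)
  then have i: "Suc i < length ts" "ts!Suc i = t"
    using ts by (simp_all add: last_conv_nth)
  have "ts!i < t"
    using i sorted_wrt_nth_less[OF ts(2), of i "Suc i"] by simp
  have mid: "(ts!i + t) / 2 \<in> {ts!i<..<ts!Suc i}"
    using \<open>ts!i < t\<close> i(2) by simp
  from \<open>ts!i < t\<close> have "eventually (\<lambda>u. u \<in> {ts!i<..<ts!Suc i}) (at_left t)"
    unfolding i(2) by (rule eventually_at_left_real)
  then have "eventually (\<lambda>u. \<rho> u = \<rho> ((ts!i + t) / 2)) (at_left t)"
    by eventually_elim (use const[OF i(1)] mid in blast)
  moreover from this have "rminus \<rho> t = \<rho> ((ts!i + t) / 2)" by (rule rminus_eqI)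
  ultimately show ?thesis by simp
qed

lemma run_same_internal_rminus:
  assumes "is_run Trk dc dop dmin \<rho>" "0 < t"
  shows "same_internal (\<rho> t) (rminus \<rho> t)"
  using assms unfolding is_run_def by (cases "\<rho> t = rminus \<rho> t") (auto simp: same_internal_def)

lemma run_invariant:
  fixes P :: "real \<Rightarrow> 'trk st \<Rightarrow> bool"
  assumes run: "is_run Trk dc dop dmin \<rho>" and "0 \<le> a" "t \<in> {a..b}"
    and start: "P a (\<rho> a)"
    and right_step: "\<And>t. a \<le> t \<Longrightarrow> t < b \<Longrightarrow> P t (\<rho> t) \<Longrightarrow>
                   eventually (\<lambda>u. P u (rplus \<rho> t)) (at_right t)"
    and left_closed: "\<And>t s. a < t \<Longrightarrow> t \<le> b \<Longrightarrow> eventually (\<lambda>u. P u s) (at_left t) \<Longrightarrow> P t s"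
    and internal: "\<And>t s s'. same_internal s s' \<Longrightarrow> P t s' \<Longrightarrow> P t s"
  shows "P t (\<rho> t)"
proof -
  have pre: "pre_run \<rho>" using run by (simp add: is_run_def)
  from \<open>t \<in> {a..b}\<close> have "a \<le> b" by simp
  from this \<open>t \<in> {a..b}\<close> show ?thesis
  proof (induction rule: real_interval_induct)
    case start
    show ?case by (fact start)
  next
    case (right t)
    have "eventually (\<lambda>u. \<rho> u = rplus \<rho> t) (at_right t)"
      using pre \<open>0 \<le> a\<close> right.hyps by (intro pre_run_eventually_rplus) auto
    with right_step[OF right.hyps right.IH] show ?case by eventually_elim simp
  next
    case (left t)
    have "0 < t" using \<open>0 \<le> a\<close> left.hyps by simp
    have "eventually (\<lambda>u. \<rho> u = rminus \<rho> t) (at_left t)"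
      using pre \<open>0 < t\<close> by (rule pre_run_eventually_rminus)
    moreover have "eventually (\<lambda>u. u \<in> {a<..<t}) (at_left t)"
      using left.hyps by (intro eventually_at_left_real) simp
    ultimately have "eventually (\<lambda>u. P u (rminus \<rho> t)) (at_left t)"
      by eventually_elim (metis left.IH greaterThanLessThan_iff less_imp_le)
    then have "P t (rminus \<rho> t)" using left.hyps by (intro left_closed)
    with run_same_internal_rminus[OF run \<open>0 < t\<close>] show ?case by (rule internal)
  qed
qed

section \<open>Executing the modules\<close>

lemma apply_upd_consistent:
  assumes "consistent U"
  shows "UDeadline x v \<in> U \<Longrightarrow> DL (apply_upd U s) x = v"
    and "UDir d \<in> U \<Longrightarrow> Dir (apply_upd U s) = d"
    and "UGate g \<in> U \<Longrightarrow> GS (apply_upd U s) = g"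
  using assms by (auto simp: apply_upd_def consistent_def intro!: the_equality)

lemma apply_upd_unchanged:
  shows "(\<And>v. UDeadline x v \<notin> U) \<Longrightarrow> DL (apply_upd U s) x = DL s x"
    and "(\<And>d. UDir d \<notin> U) \<Longrightarrow> Dir (apply_upd U s) = Dir s"
    and "(\<And>g. UGate g \<notin> U) \<Longrightarrow> GS (apply_upd U s) = GS s"
  by (simp_all add: apply_upd_def)

lemma gate_updates_consistent: "consistent (gate_updates s)"
  by (cases "Dir s") (auto simp: consistent_def gate_updates_def)

lemma UGate_gate_updates_iff:
  "UGate g \<in> gate_updates s \<longleftrightarrow> g = (if Dir s = DOpen then Opened else Closed)"
  by (cases "Dir s") (auto simp: gate_updates_def)

lemma gate_updates_only_UGate:
  "UDeadline x v \<notin> gate_updates s" "UDir d \<notin> gate_updates s"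
  by (auto simp: gate_updates_def)

lemma UGate_notin_ctrl_updates: "UGate g \<notin> ctrl_updates Trk dc dop dmin s t"
  by (auto simp: ctrl_updates_def)

lemma UDeadline_ctrl_updates_iff:
  "UDeadline x v \<in> ctrl_updates Trk dc dop dmin s t \<longleftrightarrow> x \<in> Trk \<and>
     (TS s x = Coming \<and> DL s x = Infty \<and> v = Fin (t + Wd dc dmin) \<or>
      TS s x = Empty \<and> xlt (DL s x) Infty \<and> v = Infty)"
  by (auto simp: ctrl_updates_def)

lemma UDir_ctrl_updates_iff:
  "UDir d \<in> ctrl_updates Trk dc dop dmin s t \<longleftrightarrow>
     d = DClose \<and> (\<exists>x\<in>Trk. DL s x = Fin t) \<or>
     d = DOpen \<and> Dir s = DClose \<and> safe_to_open Trk dop s t"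
  by (auto simp: ctrl_updates_def)

lemma ctrl_updates_consistent:
  assumes "0 < dop" and "\<And>x. x \<in> Trk \<Longrightarrow> DL s x = Fin t \<Longrightarrow> TS s x \<noteq> Empty"
  shows "consistent (ctrl_updates Trk dc dop dmin s t)"
proof -
  have no_conflict: "\<not> (UDir DClose \<in> ctrl_updates Trk dc dop dmin s t \<and>
                          UDir DOpen \<in> ctrl_updates Trk dc dop dmin s t)"
    using assms by (fastforce simp: UDir_ctrl_updates_iff safe_to_open_def)
  show ?thesis
    unfolding consistent_def
  proof (intro conjI allI impI)
    fix d d'
    assume "UDir d \<in> ctrl_updates Trk dc dop dmin s t \<and> UDir d' \<in> ctrl_updates Trk dc dop dmin s t"
    with no_conflict show "d = d'" by (cases d; cases d') auto
  qed (auto simp: UDeadline_ctrl_updates_iff UGate_notin_ctrl_updates)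
qed

definition executed_updates ::
  "'trk set \<Rightarrow> real \<Rightarrow> real \<Rightarrow> real \<Rightarrow> module set \<Rightarrow> 'trk st \<Rightarrow> real \<Rightarrow> 'trk upd set" where
  "executed_updates Trk dc dop dmin M s t =
     (if GateM \<in> M then gate_updates s else {}) \<union>
     (if ControllerM \<in> M \<and> consistent (ctrl_updates Trk dc dop dmin s t)
      then ctrl_updates Trk dc dop dmin s t else {})"

lemma exec_modules_eq:
  "exec_modules Trk dc dop dmin M s t = apply_upd (executed_updates Trk dc dop dmin M s t) s"
proof -
  have "(\<Union>m\<in>{m \<in> M. consistent (updates Trk dc dop dmin m s t)}. updates Trk dc dop dmin m s t) =
        executed_updates Trk dc dop dmin M s t"
    by (auto simp: executed_updates_def updates_def gate_updates_consistent split: module.splits)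
  then show ?thesis by (simp add: exec_modules_def)
qed

lemma consistent_executed_updates: "consistent (executed_updates Trk dc dop dmin M s t)"
  using gate_updates_consistent[of s]
  by (auto simp: executed_updates_def consistent_def gate_updates_only_UGate
      UGate_notin_ctrl_updates)

definition controller_deadline :: "real \<Rightarrow> 'trk st \<Rightarrow> real \<Rightarrow> 'trk \<Rightarrow> xreal" where
  "controller_deadline W s t x =
     (if TS s x = Coming \<and> DL s x = Infty then Fin (t + W)
      else if TS s x = Empty then Infty else DL s x)"

lemma DL_exec_modules:
  assumes "x \<in> Trk"
  shows "DL (exec_modules Trk dc dop dmin M s t) x =
    (if ControllerM \<in> M \<and> consistent (ctrl_updates Trk dc dop dmin s t)
     then controller_deadline (Wd dc dmin) s t x else DL s x)"
proof -
  let ?U = "executed_updates Trk dc dop dmin M s t"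
  have U: "UDeadline x v \<in> ?U \<longleftrightarrow> ControllerM \<in> M \<and> consistent (ctrl_updates Trk dc dop dmin s t) \<and>
             UDeadline x v \<in> ctrl_updates Trk dc dop dmin s t" for v
    by (auto simp: executed_updates_def gate_updates_only_UGate)
  show ?thesis
  proof (cases "\<exists>v. UDeadline x v \<in> ?U")
    case True
    then obtain v where v: "UDeadline x v \<in> ?U" by blast
    then have "ControllerM \<in> M \<and> consistent (ctrl_updates Trk dc dop dmin s t)"
      and "v = controller_deadline (Wd dc dmin) s t x"
      by (auto simp: U UDeadline_ctrl_updates_iff controller_deadline_def)
    then show ?thesis
      by (simp add: exec_modules_eq apply_upd_consistent(1)[OF consistent_executed_updates v])
  next
    case False
    with assms have "ControllerM \<in> M \<and> consistent (ctrl_updates Trk dc dop dmin s t) \<Longrightarrow>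
                     controller_deadline (Wd dc dmin) s t x = DL s x"
      unfolding U UDeadline_ctrl_updates_iff
      by (cases "DL s x") (auto simp: controller_deadline_def)
    with False show ?thesis
      unfolding exec_modules_eq by (auto simp: apply_upd_unchanged)
  qed
qed

lemma Dir_exec_modules_cases:
  "Dir (exec_modules Trk dc dop dmin M s t) = Dir s \<or>
   UDir (Dir (exec_modules Trk dc dop dmin M s t)) \<in> ctrl_updates Trk dc dop dmin s t"
proof (cases "\<exists>d. UDir d \<in> executed_updates Trk dc dop dmin M s t")
  case True
  then obtain d where d: "UDir d \<in> executed_updates Trk dc dop dmin M s t" by blast
  then have "UDir d \<in> ctrl_updates Trk dc dop dmin s t"
    by (auto simp: executed_updates_def gate_updates_only_UGate split: if_splits)
  with apply_upd_consistent(2)[OF consistent_executed_updates d] show ?thesis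
    by (simp add: exec_modules_eq)
qed (auto simp: exec_modules_eq apply_upd_unchanged)

lemma Dir_exec_modules_open:
  assumes "ControllerM \<in> M" "consistent (ctrl_updates Trk dc dop dmin s t)"
    and "UDir DOpen \<in> ctrl_updates Trk dc dop dmin s t"
  shows "Dir (exec_modules Trk dc dop dmin M s t) = DOpen"
proof -
  from assms have "UDir DOpen \<in> executed_updates Trk dc dop dmin M s t"
    by (simp add: executed_updates_def)
  then show ?thesis
    by (simp add: exec_modules_eq apply_upd_consistent(2)[OF consistent_executed_updates])
qed

lemma GS_exec_modules_cases:
  "GS (exec_modules Trk dc dop dmin M s t) = GS s \<or>
   UGate (GS (exec_modules Trk dc dop dmin M s t)) \<in> gate_updates s"
proof (cases "\<exists>g. UGate g \<in> executed_updates Trk dc dop dmin M s t")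
  case True
  then obtain g where g: "UGate g \<in> executed_updates Trk dc dop dmin M s t" by blast
  then have "UGate g \<in> gate_updates s"
    by (auto simp: executed_updates_def UGate_notin_ctrl_updates split: if_splits)
  with apply_upd_consistent(3)[OF consistent_executed_updates g] show ?thesis
    by (simp add: exec_modules_eq)
qed (auto simp: exec_modules_eq apply_upd_unchanged)

lemma run_rplus_cases:
  assumes "is_run Trk dc dop dmin \<rho>" "0 \<le> t"
  obtains "rplus \<rho> t = \<rho> t"
    | M where "rplus \<rho> t = exec_modules Trk dc dop dmin M (\<rho> t) t"
  using assms unfolding is_run_def by blast

lemma run_TS_eventually_right:
  assumes "is_run Trk dc dop dmin \<rho>" "0 \<le> t"
  shows "eventually (\<lambda>u. TS (\<rho> u) = TS (\<rho> t)) (at_right t)"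
proof -
  have "TS (rplus \<rho> t) = TS (\<rho> t)"
    using assms by (cases rule: run_rplus_cases) (simp_all add: exec_modules_eq apply_upd_def)
  with pre_run_eventually_rplus[of \<rho> t] assms show ?thesis
    by (auto simp: is_run_def elim: eventually_mono)
qed

lemma immediate_controller_fires:
  assumes "immediate Trk dc dop dmin \<rho> ControllerM" "0 \<le> t"
    and "consistent (ctrl_updates Trk dc dop dmin (\<rho> t) t)"
    and "u \<in> ctrl_updates Trk dc dop dmin (\<rho> t) t" "changes u (\<rho> t)"
  obtains M where "ControllerM \<in> M" "rplus \<rho> t = exec_modules Trk dc dop dmin M (\<rho> t) t"
proof -
  have "enabled Trk dc dop dmin ControllerM (\<rho> t) t"
    using assms(3-5) unfolding enabled_def updates_def by auto
  with assms(1,2) have "fires Trk dc dop dmin \<rho> ControllerM t"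
    unfolding immediate_def by blast
  then show ?thesis using that unfolding fires_def by blast
qed

lemma run_DL_rplus:
  assumes run: "is_run Trk dc dop dmin \<rho>" and imm: "immediate Trk dc dop dmin \<rho> ControllerM"
    and "0 \<le> t" and cons: "consistent (ctrl_updates Trk dc dop dmin (\<rho> t) t)" and "x \<in> Trk"
  shows "DL (rplus \<rho> t) x = controller_deadline (Wd dc dmin) (\<rho> t) t x"
proof (cases "controller_deadline (Wd dc dmin) (\<rho> t) t x = DL (\<rho> t) x")
  case True
  with run \<open>0 \<le> t\<close> show ?thesis
    by (cases rule: run_rplus_cases) (auto simp: DL_exec_modules[OF \<open>x \<in> Trk\<close>])
next
  case False
  let ?u = "UDeadline x (controller_deadline (Wd dc dmin) (\<rho> t) t x)"
  have "?u \<in> ctrl_updates Trk dc dop dmin (\<rho> t) t"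
    using False \<open>x \<in> Trk\<close>
    by (cases "DL (\<rho> t) x")
      (auto simp: UDeadline_ctrl_updates_iff controller_deadline_def split: if_splits)
  moreover have "changes ?u (\<rho> t)" using False by (simp add: changes_def)
  ultimately obtain M where "ControllerM \<in> M" "rplus \<rho> t = exec_modules Trk dc dop dmin M (\<rho> t) t"
    using immediate_controller_fires[OF imm \<open>0 \<le> t\<close> cons] by blast
  with cons show ?thesis by (simp add: DL_exec_modules[OF \<open>x \<in> Trk\<close>])
qed

lemma run_Dir_rplus_stays_open:
  assumes "is_run Trk dc dop dmin \<rho>" "0 \<le> t" "Dir (\<rho> t) = DOpen"
    and "\<forall>x\<in>Trk. DL (\<rho> t) x \<noteq> Fin t"
  shows "Dir (rplus \<rho> t) = DOpen"
  using assms(1,2)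
proof (cases rule: run_rplus_cases)
  case (2 M)
  with Dir_exec_modules_cases[of Trk dc dop dmin M "\<rho> t" t] assms(3,4) show ?thesis
    by (auto simp: UDir_ctrl_updates_iff)
qed (use assms in simp)

lemma run_Dir_rplus_opens:
  assumes "immediate Trk dc dop dmin \<rho> ControllerM" "0 \<le> t"
    and cons: "consistent (ctrl_updates Trk dc dop dmin (\<rho> t) t)"
    and "Dir (\<rho> t) = DClose" "safe_to_open Trk dop (\<rho> t) t"
  shows "Dir (rplus \<rho> t) = DOpen"
proof -
  have open_upd: "UDir DOpen \<in> ctrl_updates Trk dc dop dmin (\<rho> t) t"
    using assms(4,5) by (simp add: UDir_ctrl_updates_iff)
  moreover have "changes (UDir DOpen) (\<rho> t)" using assms(4) by (simp add: changes_def)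
  ultimately obtain M where "ControllerM \<in> M" "rplus \<rho> t = exec_modules Trk dc dop dmin M (\<rho> t) t"
    using immediate_controller_fires[OF assms(1,2) cons] by blast
  with cons open_upd show ?thesis by (simp add: Dir_exec_modules_open)
qed

lemma run_GS_rplus_stays_opened:
  assumes "is_run Trk dc dop dmin \<rho>" "0 \<le> t" "Dir (\<rho> t) = DOpen" "GS (\<rho> t) = Opened"
  shows "GS (rplus \<rho> t) = Opened"
  using assms(1,2)
proof (cases rule: run_rplus_cases)
  case (2 M)
  with GS_exec_modules_cases[of Trk dc dop dmin M "\<rho> t" t] assms(3,4) show ?thesis
    by (auto simp: UGate_gate_updates_iff)
qed (use assms in simp)

section \<open>The deadline invariant\<close>

(* The deadline of the i-th passage is set at tm(3i+1) and cleared at tm(3i+3); both updates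
   take effect only strictly after the moment they fire, hence the half-open window. *)
definition deadline_window :: "(nat \<Rightarrow> real) \<Rightarrow> (nat \<Rightarrow> bool) \<Rightarrow> nat \<Rightarrow> real \<Rightarrow> bool" where
  "deadline_window tm ph i t \<longleftrightarrow> ph i \<and> tm (3*i+1) < t \<and> t \<le> tm (3*i+3)"

definition correct_deadline ::
  "(nat \<Rightarrow> real) \<Rightarrow> (nat \<Rightarrow> bool) \<Rightarrow> real \<Rightarrow> real \<Rightarrow> xreal \<Rightarrow> bool" where
  "correct_deadline tm ph W t d \<longleftrightarrow>
     (\<forall>i. deadline_window tm ph i t \<longrightarrow> d = Fin (tm (3*i+1) + W)) \<and>
     (d \<noteq> Infty \<longrightarrow> (\<exists>i. deadline_window tm ph i t))"

lemma correct_deadline_Infty_iff: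
  "correct_deadline tm ph W t Infty \<longleftrightarrow> (\<forall>i. \<not> deadline_window tm ph i t)"
  by (auto simp: correct_deadline_def)

lemma correct_deadline_FinD:
  "correct_deadline tm ph W t (Fin d) \<Longrightarrow> \<exists>i. deadline_window tm ph i t \<and> d = tm (3*i+1) + W"
  by (auto simp: correct_deadline_def)

(* tm enumerates the significant moments of track x and ph i says that the i-th passage
   (moments 3i to 3i+3) takes place; after the last passage the track stays empty. *)
locale train_schedule =
  fixes dmin dmax :: real and \<rho> :: "real \<Rightarrow> 'trk st" and x :: 'trk
    and tm :: "nat \<Rightarrow> real" and ph :: "nat \<Rightarrow> bool"
  assumes tm_0: "tm 0 = 0"
    and tm_less: "ph i \<Longrightarrow> j < k \<Longrightarrow> k \<le> 3*i+3 \<Longrightarrow> tm j < tm k"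
    and segment: "ph i \<Longrightarrow> motion_segment dmin dmax \<rho> x tm i"
    and cover: "0 \<le> t \<Longrightarrow> (\<exists>i. ph i \<and> tm (3*i) \<le> t \<and> t < tm (3*i+3)) \<or>
                  (TS (\<rho> t) x = Empty \<and> (\<forall>i. ph i \<longrightarrow> tm (3*i+3) \<le> t))"
begin

lemma tm_le: "ph i \<Longrightarrow> j \<le> k \<Longrightarrow> k \<le> 3*i+3 \<Longrightarrow> tm j \<le> tm k"
  using tm_less[of i j k] by (cases "j = k") auto

lemma status_empty: "ph i \<Longrightarrow> tm (3*i) \<le> u \<Longrightarrow> u < tm (3*i+1) \<Longrightarrow> TS (\<rho> u) x = Empty"
  using segment[of i] by (simp add: motion_segment_def)

lemma status_coming: "ph i \<Longrightarrow> tm (3*i+1) \<le> u \<Longrightarrow> u < tm (3*i+2) \<Longrightarrow> TS (\<rho> u) x = Coming"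
  using segment[of i] by (simp add: motion_segment_def)

lemma status_incrossing:
  "ph i \<Longrightarrow> tm (3*i+2) \<le> u \<Longrightarrow> u < tm (3*i+3) \<Longrightarrow> TS (\<rho> u) x = Incrossing"
  using segment[of i] by (simp add: motion_segment_def)

lemma coming_duration: "ph i \<Longrightarrow> dmin \<le> tm (3*i+2) - tm (3*i+1) \<and> tm (3*i+2) - tm (3*i+1) \<le> dmax"
  using segment[of i] by (simp add: motion_segment_def)

lemma status_passage_end:
  assumes "ph i"
  shows "TS (\<rho> (tm (3*i+3))) x = Empty"
proof -
  have "0 \<le> tm (3*i+3)" using tm_le[OF assms, of 0 "3*i+3"] tm_0 by simp
  from cover[OF this] show ?thesis
  proof (elim disjE exE conjE)
    fix j assume j: "ph j" "tm (3*j) \<le> tm (3*i+3)" "tm (3*i+3) < tm (3*j+3)"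
    have "\<not> j \<le> i" using tm_le[OF assms, of "3*j+3" "3*i+3"] j(3) by auto
    moreover have "\<not> i + 2 \<le> j" using tm_less[OF j(1), of "3*i+3" "3*j"] j(2) by auto
    ultimately have "3*j = 3*i+3" by simp
    with j show ?thesis using status_empty[of j] tm_less[of j "3*j" "3*j+1"] by simp
  qed
qed

lemma deadline_window_unique:
  assumes "deadline_window tm ph i t" "deadline_window tm ph j t"
  shows "i = j"
proof (rule ccontr)
  assume "i \<noteq> j"
  then consider "i < j" | "j < i" by linarith
  then show False
  proof cases
    case 1
    then have "tm (3*i+3) \<le> tm (3*j+1)"
      using assms(2) by (intro tm_le[of j]) (auto simp: deadline_window_def)
    with assms show False by (auto simp: deadline_window_def)
  next
    case 2
    then have "tm (3*j+3) \<le> tm (3*i+1)"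
      using assms(1) by (intro tm_le[of i]) (auto simp: deadline_window_def)
    with assms show False by (auto simp: deadline_window_def)
  qed
qed

lemma approach_start_inj:
  assumes "ph i" "ph j" "tm (3*i+1) = tm (3*j+1)"
  shows "i = j"
  using tm_less[OF assms(1), of "3*j+1" "3*i+1"] tm_less[OF assms(2), of "3*i+1" "3*j+1"] assms(3)
  by (cases i j rule: linorder_cases) auto

lemma no_deadline_window_before_approach:
  assumes "ph i" "tm (3*i) < t" "t \<le> tm (3*i+1)"
  shows "\<not> deadline_window tm ph j t"
proof
  assume j: "deadline_window tm ph j t"
  consider "j < i" | "j = i" | "i < j" by linarith
  then show False
  proof cases
    case 1
    then have "tm (3*j+3) \<le> tm (3*i)" by (intro tm_le[OF assms(1)]) auto
    with j assms show False by (auto simp: deadline_window_def)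
  next
    case 2
    with j assms show False by (auto simp: deadline_window_def)
  next
    case 3
    with j have "tm (3*i+1) < tm (3*j+1)" by (intro tm_less[of j]) (auto simp: deadline_window_def)
    with j assms show False by (auto simp: deadline_window_def)
  qed
qed

lemma correct_deadline_in_window:
  "deadline_window tm ph i t \<Longrightarrow> correct_deadline tm ph W t (Fin (tm (3*i+1) + W))"
  using deadline_window_unique by (auto simp: correct_deadline_def)

lemma correct_deadline_0: "correct_deadline tm ph W 0 Infty"
proof -
  have "0 < tm (3*i+1)" if "ph i" for i using tm_less[OF that, of 0 "3*i+1"] tm_0 by simp
  then show ?thesis
    unfolding correct_deadline_Infty_iff deadline_window_def using less_asym by blast
qed

lemma correct_deadline_step:
  assumes "0 \<le> t" and dl: "correct_deadline tm ph W t (DL (\<rho> t) x)"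
  shows "eventually (\<lambda>u. correct_deadline tm ph W u (controller_deadline W (\<rho> t) t x)) (at_right t)"
  using cover[OF \<open>0 \<le> t\<close>]
proof (elim disjE exE conjE)
  fix i assume i: "ph i" "tm (3*i) \<le> t" "t < tm (3*i+3)"
  consider (empty) "t < tm (3*i+1)" | (approaching) "tm (3*i+1) \<le> t" by linarith
  then show ?thesis
  proof cases
    case empty
    have "controller_deadline W (\<rho> t) t x = Infty"
      using status_empty[OF i(1,2) empty] by (simp add: controller_deadline_def)
    moreover have "eventually (\<lambda>u. u \<in> {t<..<tm (3*i+1)}) (at_right t)"
      using empty by (rule eventually_at_right_real)
    ultimately show ?thesis
      using i(2) no_deadline_window_before_approach[OF i(1)]
      by (auto elim!: eventually_mono simp: correct_deadline_Infty_iff)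
  next
    case approaching
    have cd: "controller_deadline W (\<rho> t) t x = Fin (tm (3*i+1) + W)"
    proof (cases "t = tm (3*i+1)")
      case True
      then have "\<not> deadline_window tm ph j t" for j
        using no_deadline_window_before_approach[OF i(1)] tm_less[OF i(1), of "3*i" "3*i+1"] by simp
      with dl have "DL (\<rho> t) x = Infty" by (auto simp: correct_deadline_def)
      moreover have "TS (\<rho> t) x = Coming"
        using status_coming[OF i(1)] tm_less[OF i(1), of "3*i+1" "3*i+2"] True by simp
      ultimately show ?thesis using True by (simp add: controller_deadline_def)
    next
      case False
      with approaching i have "deadline_window tm ph i t" by (simp add: deadline_window_def)
      with dl have "DL (\<rho> t) x = Fin (tm (3*i+1) + W)" by (simp add: correct_deadline_def)
      moreover have "TS (\<rho> t) x \<noteq> Empty"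
        using status_coming[OF i(1), of t] status_incrossing[OF i(1), of t] approaching i(3)
        by (cases "t < tm (3*i+2)") auto
      ultimately show ?thesis by (simp add: controller_deadline_def)
    qed
    from i(3) have "eventually (\<lambda>u. u \<in> {t<..<tm (3*i+3)}) (at_right t)"
      by (rule eventually_at_right_real)
    then show ?thesis
      unfolding cd
      by eventually_elim
        (rule correct_deadline_in_window, use approaching i(1) in \<open>auto simp: deadline_window_def\<close>)
  qed
next
  assume "TS (\<rho> t) x = Empty" "\<forall>i. ph i \<longrightarrow> tm (3*i+3) \<le> t"
  with eventually_at_right_less[of t] show ?thesis
    by (auto elim!: eventually_mono
        simp: controller_deadline_def correct_deadline_Infty_iff deadline_window_def)
qed

lemma correct_deadline_left_closed:
  assumes ev: "eventually (\<lambda>u. correct_deadline tm ph W u d) (at_left t)"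
  shows "correct_deadline tm ph W t d"
proof -
  have "d = Fin (tm (3*i+1) + W)" if w: "deadline_window tm ph i t" for i
  proof -
    have "eventually (\<lambda>u. u \<in> {tm (3*i+1)<..<t}) (at_left t)"
      using w by (intro eventually_at_left_real) (simp add: deadline_window_def)
    with ev have "eventually (\<lambda>u. d = Fin (tm (3*i+1) + W)) (at_left t)"
      by eventually_elim (use w in \<open>auto simp: correct_deadline_def deadline_window_def\<close>)
    then show ?thesis by simp
  qed
  moreover have "\<exists>i. deadline_window tm ph i t" if "d \<noteq> Infty"
  proof -
    from ev have ev': "eventually (\<lambda>u. \<exists>i. deadline_window tm ph i u \<and> d = Fin (tm (3*i+1) + W))
                        (at_left t)"
      by eventually_elim (use that in \<open>auto simp: correct_deadline_def\<close>)
    moreover have "eventually (\<lambda>u. u \<in> {t - 1<..<t}) (at_left t)"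
      by (rule eventually_at_left_real) simp
    ultimately have "eventually (\<lambda>u. u < t \<and>
                       (\<exists>i. deadline_window tm ph i u \<and> d = Fin (tm (3*i+1) + W))) (at_left t)"
      by eventually_elim auto
    then obtain u i
      where "u < t" and w: "deadline_window tm ph i u" and d: "d = Fin (tm (3*i+1) + W)"
      using eventually_happens'[OF trivial_limit_at_left_real] by blast
    from ev' have "eventually (\<lambda>u. u \<le> tm (3*i+3)) (at_left t)"
      by eventually_elim (use w d approach_start_inj in \<open>auto simp: deadline_window_def\<close>)
    then have "t \<le> tm (3*i+3)"
      by (rule tendsto_upperbound[OF tendsto_ident_at]) simp
    with w \<open>u < t\<close> show ?thesis by (auto simp: deadline_window_def)
  qed
  ultimately show ?thesis by (auto simp: correct_deadline_def)
qed

lemma deadline_before_crossing: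
  assumes "correct_deadline tm ph W t (Fin d)" "W < dmin"
    and "d = t \<or> TS (\<rho> t) x = Coming"
  obtains i where "ph i" "d = tm (3*i+1) + W" "tm (3*i+1) < t" "t < tm (3*i+2)"
proof -
  obtain i where w: "deadline_window tm ph i t" and d: "d = tm (3*i+1) + W"
    using correct_deadline_FinD[OF assms(1)] by blast
  have "t < tm (3*i+2)"
  proof (rule ccontr)
    assume crossed: "\<not> t < tm (3*i+2)"
    from assms(3) show False
    proof
      assume "d = t"
      with d coming_duration[of i] w assms(2) crossed show False by (auto simp: deadline_window_def)
    next
      assume "TS (\<rho> t) x = Coming"
      with w crossed status_incrossing[of i t] status_passage_end[of i] show False
        by (cases "t = tm (3*i+3)") (auto simp: deadline_window_def)
    qed
  qed
  with w d that show ?thesis by (auto simp: deadline_window_def)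
qed

lemma due_deadline_coming:
  assumes "correct_deadline tm ph W t (Fin t)" "W < dmin"
  shows "TS (\<rho> t) x = Coming"
  using assms by (auto elim!: deadline_before_crossing intro: status_coming)

lemma no_crossing_deadline_bound:
  assumes "correct_deadline tm ph W t (Fin d)" "W < dmin" "d = t \<or> TS (\<rho> t) x = Coming"
    and "\<alpha> \<le> t" and no_crossing: "\<forall>u\<in>{\<alpha><..<\<beta>}. TS (\<rho> u) x \<noteq> Incrossing"
  shows "\<beta> - dmax + W \<le> d"
proof -
  obtain i where i: "ph i" "d = tm (3*i+1) + W" "tm (3*i+1) < t" "t < tm (3*i+2)"
    using deadline_before_crossing[OF assms(1-3)] .
  have "TS (\<rho> (tm (3*i+2))) x = Incrossing"
    using status_incrossing[OF i(1)] tm_less[OF i(1), of "3*i+2" "3*i+3"] by simp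
  with no_crossing i(4) \<open>\<alpha> \<le> t\<close> have "\<beta> \<le> tm (3*i+2)" by force
  with coming_duration[OF i(1)] i(2) show ?thesis by simp
qed

end

lemma train_schedule_infinite:
  assumes "tm 0 = 0" "strict_mono tm" "\<And>i. motion_segment dmin dmax \<rho> x tm i" "0 < dmin"
  shows "train_schedule dmin dmax \<rho> x tm (\<lambda>_. True)"
proof
  have grows: "real n * dmin \<le> tm (3*n)" for n
  proof (induction n)
    case (Suc n)
    have "dmin \<le> tm (3*n+2) - tm (3*n+1)" using assms(3)[of n] by (simp add: motion_segment_def)
    moreover have "tm (3*n) < tm (3*n+1)" "tm (3*n+2) < tm (3*n+3)"
      using assms(2) by (simp_all add: strict_mono_less)
    ultimately show ?case using Suc by (simp add: algebra_simps)
  qed (simp add: assms(1))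
  fix t :: real assume "0 \<le> t"
  obtain n where "t < real n * dmin" using ex_less_of_nat_mult[OF assms(4)] by blast
  with grows have "t < tm (3*n)" by (meson less_le_trans)
  with \<open>0 \<le> t\<close> assms(1) obtain j where "tm (3*j) \<le> t" "t < tm (3*j+3)"
    using ex_index_bracketing[of "\<lambda>i. tm (3*i)" t n] by (auto simp: add.commute)
  then show "(\<exists>i. True \<and> tm (3*i) \<le> t \<and> t < tm (3*i+3)) \<or>
             (TS (\<rho> t) x = Empty \<and> (\<forall>i. True \<longrightarrow> tm (3*i+3) \<le> t))"
    by auto
qed (use assms in \<open>simp_all add: strict_mono_less\<close>)

lemma train_schedule_finite:
  assumes "tm 0 = 0" "\<forall>i<k. tm i < tm (Suc i)" "3 dvd k"
    and "\<forall>i. 3*i+3 \<le> k \<longrightarrow> motion_segment dmin dmax \<rho> x tm i"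
    and "\<forall>u\<ge>tm k. TS (\<rho> u) x = Empty"
  shows "train_schedule dmin dmax \<rho> x tm (\<lambda>i. 3*i+3 \<le> k)"
proof
  have less: "tm j < tm l" if "j < l" "l \<le> k" for j l
    using chain_less[of k tm j l] assms(2) that by blast
  then show "3*i+3 \<le> k \<Longrightarrow> j < l \<Longrightarrow> l \<le> 3*i+3 \<Longrightarrow> tm j < tm l" for i j l
    by simp
  fix t :: real assume "0 \<le> t"
  obtain m where m: "k = 3*m" using assms(3) by blast
  show "(\<exists>i. 3*i+3 \<le> k \<and> tm (3*i) \<le> t \<and> t < tm (3*i+3)) \<or>
        (TS (\<rho> t) x = Empty \<and> (\<forall>i. 3*i+3 \<le> k \<longrightarrow> tm (3*i+3) \<le> t))"
  proof (cases "t < tm k")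
    case True
    with \<open>0 \<le> t\<close> assms(1) m obtain j where "j < m" "tm (3*j) \<le> t" "t < tm (3*j+3)"
      using ex_index_bracketing[of "\<lambda>i. tm (3*i)" t m] by (auto simp: add.commute)
    with m show ?thesis by auto
  next
    case False
    then have "tm (3*i+3) \<le> t" if "3*i+3 \<le> k" for i
      using less[of "3*i+3" k] that by (cases "3*i+3 = k") auto
    with False assms(5) show ?thesis by auto
  qed
qed (use assms in auto)

lemma train_motion_schedule:
  assumes "train_motion dmin dmax \<rho> x" "0 < dmin"
  shows "\<exists>tm ph. train_schedule dmin dmax \<rho> x tm ph"
  using assms train_schedule_infinite train_schedule_finite unfolding train_motion_def by metis

lemma regular_run_schedules:
  assumes "regular_run Trk dc dop dmin dmax \<rho>" "0 < dmin"
  obtains tm ph where "\<And>x. x \<in> Trk \<Longrightarrow> train_schedule dmin dmax \<rho> x (tm x) (ph x)"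
proof -
  have "\<forall>x\<in>Trk. \<exists>p. train_schedule dmin dmax \<rho> x (fst p) (snd p)"
    using assms train_motion_schedule by (fastforce simp: regular_run_def)
  then obtain p where "\<forall>x\<in>Trk. train_schedule dmin dmax \<rho> x (fst (p x)) (snd (p x))"
    by (rule bchoice[elim_format]) blast
  then show ?thesis using that[of "\<lambda>x. fst (p x)" "\<lambda>x. snd (p x)"] by blast
qed

section \<open>Regular runs\<close>

locale regular_crossing =
  fixes Trk :: "'trk set" and dc dop dmin dmax :: real and \<rho> :: "real \<Rightarrow> 'trk st"
    and tm :: "'trk \<Rightarrow> nat \<Rightarrow> real" and ph :: "'trk \<Rightarrow> nat \<Rightarrow> bool"
  assumes finite_Trk: "finite Trk"
    and dc_pos: "0 < dc" and dop_pos: "0 < dop"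
    and regular: "regular_run Trk dc dop dmin dmax \<rho>"
    and schedule: "x \<in> Trk \<Longrightarrow> train_schedule dmin dmax \<rho> x (tm x) (ph x)"
begin

abbreviation "W \<equiv> Wd dc dmin"

lemma W_less_dmin: "W < dmin"
  using dc_pos by (simp add: Wd_def)

lemma run: "is_run Trk dc dop dmin \<rho>"
  and immediate_controller: "immediate Trk dc dop dmin \<rho> ControllerM"
  using regular by (simp_all add: regular_run_def)

lemma controller_consistent:
  assumes "\<forall>x\<in>Trk. correct_deadline (tm x) (ph x) W t (DL (\<rho> t) x)"
  shows "consistent (ctrl_updates Trk dc dop dmin (\<rho> t) t)"
  using dop_pos
proof (rule ctrl_updates_consistent)
  fix x assume "x \<in> Trk" "DL (\<rho> t) x = Fin t"
  with assms show "TS (\<rho> t) x \<noteq> Empty"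
    using train_schedule.due_deadline_coming[OF schedule _ W_less_dmin] by fastforce
qed

lemma deadlines_correct:
  assumes "0 \<le> t"
  shows "\<forall>x\<in>Trk. correct_deadline (tm x) (ph x) W t (DL (\<rho> t) x)"
proof -
  let ?P = "\<lambda>t s. \<forall>x\<in>Trk. correct_deadline (tm x) (ph x) W t (DL s x)"
  from assms have "t \<in> {0..t}" by simp
  then show ?thesis
  proof (rule run_invariant[OF run order_refl, where P = ?P])
    show "?P 0 (\<rho> 0)"
      using regular train_schedule.correct_deadline_0[OF schedule]
      by (simp add: regular_run_def initial_state_def)
  next
    fix s assume "0 \<le> s" "?P s (\<rho> s)"
    then have "DL (rplus \<rho> s) x = controller_deadline W (\<rho> s) s x" if "x \<in> Trk" for x
      using run_DL_rplus[OF run immediate_controller _ controller_consistent that] by blast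
    moreover have "\<forall>x\<in>Trk. eventually (\<lambda>u. correct_deadline (tm x) (ph x) W u
                                          (controller_deadline W (\<rho> s) s x)) (at_right s)"
      using train_schedule.correct_deadline_step[OF schedule] \<open>0 \<le> s\<close> \<open>?P s (\<rho> s)\<close> by blast
    ultimately show "eventually (\<lambda>u. ?P u (rplus \<rho> s)) (at_right s)"
      by (simp add: eventually_ball_finite_distrib[OF finite_Trk])
  next
    fix s and st :: "'trk st" assume "eventually (\<lambda>u. ?P u st) (at_left s)"
    then show "?P s st"
      using train_schedule.correct_deadline_left_closed[OF schedule]
      by (simp add: eventually_ball_finite_distrib[OF finite_Trk])
  qed (simp add: same_internal_def)
qed

end

locale quiet_interval = regular_crossing +
  fixes \<alpha> \<beta> :: real
  assumes start_nonneg: "0 \<le> \<alpha>" and start_less: "\<alpha> < \<beta>"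
    and open_window: "\<alpha> + dop < \<beta> - Delta_close dc dmin dmax"
    and no_crossing: "\<forall>x\<in>Trk. \<forall>u\<in>{\<alpha><..<\<beta>}. TS (\<rho> u) x \<noteq> Incrossing"
begin

lemma deadline_bound:
  assumes "x \<in> Trk" "\<alpha> \<le> t" "DL (\<rho> t) x = Fin d" "d = t \<or> TS (\<rho> t) x = Coming"
  shows "\<beta> - Delta_close dc dmin dmax \<le> d"
proof -
  have "correct_deadline (tm x) (ph x) W t (Fin d)"
    using deadlines_correct[of t] assms start_nonneg by auto
  then have "\<beta> - dmax + W \<le> d"
    using train_schedule.no_crossing_deadline_bound
        [OF schedule[OF \<open>x \<in> Trk\<close>] _ W_less_dmin assms(4,2)]
      no_crossing assms(1) by blast
  then show ?thesis by (simp add: Delta_close_def Wd_def)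
qed

lemma no_due_deadline:
  assumes "\<alpha> \<le> t" "t < \<beta> - Delta_close dc dmin dmax"
  shows "\<forall>x\<in>Trk. DL (\<rho> t) x \<noteq> Fin t"
  using deadline_bound assms by fastforce

lemma not_incrossing_at_start:
  assumes "x \<in> Trk"
  shows "TS (\<rho> \<alpha>) x \<noteq> Incrossing"
proof -
  have "eventually (\<lambda>u. TS (\<rho> u) = TS (\<rho> \<alpha>)) (at_right \<alpha>)"
    using run start_nonneg by (rule run_TS_eventually_right)
  moreover have "eventually (\<lambda>u. u \<in> {\<alpha><..<\<beta>}) (at_right \<alpha>)"
    using start_less by (rule eventually_at_right_real)
  ultimately have "eventually (\<lambda>u. TS (\<rho> \<alpha>) x \<noteq> Incrossing) (at_right \<alpha>)"
    by eventually_elim (use no_crossing assms in metis)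
  then show ?thesis by simp
qed

lemma safe_to_open_at_start: "safe_to_open Trk dop (\<rho> \<alpha>) \<alpha>"
  unfolding safe_to_open_def
proof
  fix x assume x: "x \<in> Trk"
  show "TS (\<rho> \<alpha>) x = Empty \<or> xlt (Fin (\<alpha> + dop)) (DL (\<rho> \<alpha>) x)"
  proof (cases "TS (\<rho> \<alpha>) x")
    case Coming
    then show ?thesis
      using deadline_bound[OF x order_refl] open_window by (cases "DL (\<rho> \<alpha>) x") fastforce+
  qed (use not_incrossing_at_start[OF x] in auto)
qed

lemma Dir_open:
  assumes "t \<in> {\<alpha><..\<beta> - Delta_close dc dmin dmax}"
  shows "Dir (\<rho> t) = DOpen"
proof -
  let ?P = "\<lambda>t s. \<alpha> < t \<longrightarrow> Dir s = DOpen"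
  from assms have "t \<in> {\<alpha>..\<beta> - Delta_close dc dmin dmax}" by simp
  then have "?P t (\<rho> t)"
  proof (rule run_invariant[OF run start_nonneg, where P = ?P])
    fix s assume s: "\<alpha> \<le> s" "s < \<beta> - Delta_close dc dmin dmax" "?P s (\<rho> s)"
    have "0 \<le> s" using s start_nonneg by simp
    have "Dir (rplus \<rho> s) = DOpen"
    proof (cases "Dir (\<rho> s)")
      case DOpen
      with run \<open>0 \<le> s\<close> show ?thesis
        using no_due_deadline[OF s(1,2)] by (rule run_Dir_rplus_stays_open)
    next
      case DClose
      \<comment> \<open>only possible at \<alpha> itself, where SafeToOpen makes SignalOpen fire\<close>
      with s have "s = \<alpha>" by auto
      with DClose safe_to_open_at_start show ?thesis
        using run_Dir_rplus_opens[OF immediate_controller \<open>0 \<le> s\<close>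
            controller_consistent[OF deadlines_correct[OF \<open>0 \<le> s\<close>]]] by blast
    qed
    then show "eventually (\<lambda>u. ?P u (rplus \<rho> s)) (at_right s)" by simp
  next
    fix s and st :: "'trk st" assume "\<alpha> < s" and ev: "eventually (\<lambda>u. ?P u st) (at_left s)"
    from \<open>\<alpha> < s\<close> have "eventually (\<lambda>u. u \<in> {\<alpha><..<s}) (at_left s)"
      by (rule eventually_at_left_real)
    with ev have "eventually (\<lambda>u. Dir st = DOpen) (at_left s)"
      by eventually_elim auto
    then show "?P s st" by simp
  qed (simp_all add: same_internal_def)
  with assms show ?thesis by simp
qed

lemma GS_opened:
  assumes "t \<in> {\<alpha> + dop..\<beta> - Delta_close dc dmin dmax}"
  shows "GS (\<rho> t) = Opened"
proof -
  from regular start_nonneg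
  have "\<not> (\<forall>u\<in>{\<alpha><..<\<alpha>+dop}. Dir (\<rho> u) = DOpen \<and> GS (\<rho> u) = Closed)"
    by (auto simp: regular_run_def gate_timing_def)
  then obtain u0 where u0: "\<alpha> < u0" "u0 < \<alpha> + dop" "\<not> (Dir (\<rho> u0) = DOpen \<and> GS (\<rho> u0) = Closed)"
    by auto
  with Dir_open[of u0] open_window have "GS (\<rho> u0) = Opened" by (cases "GS (\<rho> u0)") auto
  from assms u0 have t: "t \<in> {u0..\<beta> - Delta_close dc dmin dmax}" by simp
  show ?thesis
  proof (rule run_invariant[where P = "\<lambda>_ s. GS s = Opened", OF run _ t])
    show "0 \<le> u0" using u0 start_nonneg by simp
  next
    fix s assume "u0 \<le> s" "s < \<beta> - Delta_close dc dmin dmax" "GS (\<rho> s) = Opened"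
    moreover have "Dir (\<rho> s) = DOpen" using Dir_open \<open>u0 \<le> s\<close> \<open>s < _\<close> u0 by simp
    ultimately have "GS (rplus \<rho> s) = Opened"
      using run_GS_rplus_stays_opened[OF run] u0 start_nonneg by simp
    then show "eventually (\<lambda>u. GS (rplus \<rho> s) = Opened) (at_right s)" by simp
  qed (simp_all add: \<open>GS (\<rho> u0) = Opened\<close> same_internal_def)
qed

end

theorem mainTheorem10:
  fixes Trk :: "'trk set" and dc dop dmin dmax :: real and \<rho> :: "real \<Rightarrow> 'trk st"
    and \<alpha> \<beta> :: real
  assumes "finite Trk"
    and "0 < dc" and "0 < dop" and "0 < dmin" and "0 < dmax"
    and "dc < dmin" and "dmin \<le> dmax"
    and "regular_run Trk dc dop dmin dmax \<rho>"
    and "0 \<le> \<alpha>" and "\<alpha> < \<beta>"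
    and "\<alpha> + dop < \<beta> - Delta_close dc dmin dmax"
    and "\<forall>x\<in>Trk. \<forall>u \<in> {\<alpha><..<\<beta>}. TS (\<rho> u) x \<noteq> Incrossing"
  shows "\<forall>u \<in> {\<alpha> + dop .. \<beta> - Delta_close dc dmin dmax}. GS (\<rho> u) = Opened"
proof -
  obtain tm ph where "\<And>x. x \<in> Trk \<Longrightarrow> train_schedule dmin dmax \<rho> x (tm x) (ph x)"
    using regular_run_schedules[OF assms(8,4)] by blast
  with assms interpret quiet_interval Trk dc dop dmin dmax \<rho> tm ph \<alpha> \<beta>
    by (intro quiet_interval.intro regular_crossing.intro quiet_interval_axioms.intro) auto
  show ?thesis using GS_opened by blast
qed

end
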